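(* Let $M\ge1$, $\boldsymbol{y},\boldsymbol{g}\in\mathbb{C}^{4M+1}$ and $\lambda_w>0$. Then $(\hat{\boldsymbol{x}}_1,\hat{\boldsymbol{x}}_2)$ is a minimizer of $$\min_{\boldsymbol{x}_1,\boldsymbol{x}_2}\ \tfrac12\|\boldsymbol{y}-\boldsymbol{x}_1-\boldsymbol{g}\odot\boldsymbol{x}_2\|_2^2+\lambda_w(\|\boldsymbol{x}_1\|_{\mathcal{A}}+\|\boldsymbol{x}_2\|_{\mathcal{A}})$$ if and only if, with $\boldsymbol{r}=\boldsymbol{y}-(\hat{\boldsymbol{x}}_1+\boldsymbol{g}\odot\hat{\boldsymbol{x}}_2)$, $$\|\boldsymbol{r}\|_{\mathcal{A}}^\star\le\lambda_w,\qquad \|\bar{\boldsymbol{g}}\odot\boldsymbol{r}\|_{\mathcal{A}}^\star\le\lambda_w,\qquad \langle\boldsymbol{r},\hat{\boldsymbol{x}}_1+\boldsymbol{g}\odot\hat{\boldsymbol{x}}_2\rangle_{\mathbb{R}}=\lambda_w\|\hat{\boldsymbol{x}}_1\|_{\mathcal{A}}+\lambda_w\|\hat{\boldsymbol{x}}_2\|_{\mathcal{A}}.$$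
   Context: $\boldsymbol{c}(\tau)\in\mathbb{C}^{4M+1}$ has entries $e^{-j2\pi n\tau}$, $n=-2M,\dots,2M$ ($j=\sqrt{-1}$); $\odot$ is entrywise product; $\|\boldsymbol{x}\|_{\mathcal{A}}=\inf\{\sum_k|a_k|:\boldsymbol{x}=\sum_ka_k\boldsymbol{c}(\tau_k),a_k\in\mathbb{C},\tau_k\in[0,1)\}$. Inner products: $\langle\boldsymbol{p},\boldsymbol{x}\rangle=\boldsymbol{x}^H\boldsymbol{p}$ and $\langle\boldsymbol{p},\boldsymbol{x}\rangle_{\mathbb{R}}=\mathrm{Re}(\boldsymbol{x}^H\boldsymbol{p})$. Dual norm: $\|\boldsymbol{p}\|_{\mathcal{A}}^\star=\sup_{\|\boldsymbol{x}\|_{\mathcal{A}}\le1}\langle\boldsymbol{p},\boldsymbol{x}\rangle_{\mathbb{R}}=\sup_{\tau\in[0,1)}|\sum_{n=-2M}^{2M}p_ne^{j2\pi n\tau}|$. *)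

theory Defs
  imports "HOL-Analysis.Analysis"
begin

text \<open>Vectors in C^(4M+1) are represented as functions int => complex indexed by
  n = -2M..2M, vanishing outside this index range.\<close>

definition idx :: "nat \<Rightarrow> int set" where
  "idx M = {-2 * int M .. 2 * int M}"

definition cvec :: "nat \<Rightarrow> (int \<Rightarrow> complex) set" where
  "cvec M = {x. \<forall>n. n \<notin> idx M \<longrightarrow> x n = 0}"

definition atom :: "nat \<Rightarrow> real \<Rightarrow> int \<Rightarrow> complex" where
  "atom M \<tau> n = (if n \<in> idx M then exp (- \<i> * complex_of_real (2 * pi * of_int n * \<tau>)) else 0)"

definition hadamard :: "(int \<Rightarrow> complex) \<Rightarrow> (int \<Rightarrow> complex) \<Rightarrow> int \<Rightarrow> complex" where
  "hadamard u v = (\<lambda>n. u n * v n)"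

definition atomic_norm :: "nat \<Rightarrow> (int \<Rightarrow> complex) \<Rightarrow> real" where
  "atomic_norm M x = Inf {(\<Sum>k<K. norm (a k)) | (K::nat) a \<tau>.
      (\<forall>k<K. \<tau> k \<in> {0..<1}) \<and> (\<forall>n\<in>idx M. x n = (\<Sum>k<K. a k * atom M (\<tau> k) n))}"

definition rinner :: "nat \<Rightarrow> (int \<Rightarrow> complex) \<Rightarrow> (int \<Rightarrow> complex) \<Rightarrow> real" where
  "rinner M p x = Re (\<Sum>n\<in>idx M. cnj (x n) * p n)"

definition dual_atomic_norm :: "nat \<Rightarrow> (int \<Rightarrow> complex) \<Rightarrow> real" where
  "dual_atomic_norm M p = Sup {rinner M p x | x. x \<in> cvec M \<and> atomic_norm M x \<le> 1}"

definition objective :: "nat \<Rightarrow> real \<Rightarrow> (int \<Rightarrow> complex) \<Rightarrow> (int \<Rightarrow> complex)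
    \<Rightarrow> (int \<Rightarrow> complex) \<Rightarrow> (int \<Rightarrow> complex) \<Rightarrow> real" where
  "objective M lam y g x1 x2 =
     1/2 * (\<Sum>n\<in>idx M. (norm (y n - x1 n - g n * x2 n))\<^sup>2)
     + lam * (atomic_norm M x1 + atomic_norm M x2)"

end

theory Submission
  imports Defs
begin

text \<open>
  Expanding the square around a candidate \<open>(x\<^sub>1, x\<^sub>2)\<close> writes the objective at
  \<open>(x\<^sub>1 + d\<^sub>1, x\<^sub>2 + d\<^sub>2)\<close> as the old value, minus \<open>\<langle>r, d\<^sub>1 + g \<odot> d\<^sub>2\<rangle>\<^sub>\<real>\<close>,
  plus a quadratic term, plus the change of the penalty. Perturbing by \<open>s (z\<^sub>1, z\<^sub>2)\<close> and
  letting \<open>s \<rightarrow> 0\<close> (triangle inequality for the atomic norm) gives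
  \<open>\<langle>r, z\<^sub>1 + g \<odot> z\<^sub>2\<rangle>\<^sub>\<real> \<le> \<lambda> (\<parallel>z\<^sub>1\<parallel>\<^sub>\<A> + \<parallel>z\<^sub>2\<parallel>\<^sub>\<A>)\<close>, which splits into the two
  dual-norm bounds; shrinking the candidate to \<open>(1 - s) (x\<^sub>1, x\<^sub>2)\<close> (homogeneity) gives the
  reverse inequality in the equality condition. Conversely these conditions bound the linear term
  by the change of the penalty, and the quadratic term is nonnegative. The atomic norm is an
  infimum over a nonempty set because \<open>4M + 1\<close> equispaced atoms already span every vector
  (discrete Fourier inversion).
\<close>

lemma sum_exp_roots_of_unity:
  fixes d :: int and N :: nat
  assumes "\<bar>d\<bar> < int N"
  shows "(\<Sum>k<N. exp (- \<i> * complex_of_real (2 * pi * of_int d * real k / real N)))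
         = (if d = 0 then of_nat N else 0)"
proof (cases "d = 0")
  case False
  have N: "real N > 0" using assms by simp
  define w where "w = exp (- \<i> * complex_of_real (2 * pi * of_int d / real N))"
  have power_w: "exp (- \<i> * complex_of_real (2 * pi * of_int d * x / real N)) = w ^ k"
    if "x = real k" for x k
    unfolding w_def exp_of_nat_mult[symmetric] that by (simp add: field_simps)
  have "w ^ N = exp (- \<i> * complex_of_real (2 * pi * of_int d))"
    using power_w[of "real N" N] N by simp
  also have "\<dots> = 1"
    by (subst exp_eq_1) (auto intro!: exI[of _ "-d"])
  finally have "w ^ N = 1" .
  moreover have "w \<noteq> 1"
  proof
    assume "w = 1"
    then obtain n :: int where "- (2 * pi * of_int d / real N) = of_int (2 * n) * pi"
      unfolding w_def exp_eq_1 by auto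
    then have "pi * real_of_int (- d) = pi * real_of_int (n * int N)"
      using N by (simp add: field_simps)
    then have "- d = n * int N"
      by (simp only: mult_cancel_left of_int_eq_iff pi_neq_zero simp_thms)
    then have "\<bar>d\<bar> = \<bar>n\<bar> * int N" and "n \<noteq> 0"
      using False by (metis abs_minus_cancel abs_mult abs_of_nat, auto)
    then show False
      using assms mult_right_mono[of 1 "\<bar>n\<bar>" "int N"] by linarith
  qed
  ultimately show ?thesis
    using False by (simp only: power_w[OF refl] sum_gp_strict) simp
qed simp

lemma finite_idx [simp]: "finite (idx M)"
  by (simp add: idx_def)

lemma cnj_atom_mult_atom:
  assumes "m \<in> idx M" "n \<in> idx M"
  shows "cnj (atom M t m) * atom M t n = exp (- \<i> * complex_of_real (2 * pi * of_int (n - m) * t))"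
  using assms by (simp add: atom_def exp_cnj flip: exp_add) (simp add: algebra_simps)

lemma atomic_decomposition_exists:
  "\<exists>(K::nat) a \<tau>. (\<forall>k<K. \<tau> k \<in> {0..<1}) \<and> (\<forall>n\<in>idx M. x n = (\<Sum>k<K. a k * atom M (\<tau> k) n))"
proof -
  define N where "N = 4 * M + 1"
  define \<tau> where "\<tau> k = real k / real N" for k
  define a where "a k = (\<Sum>m\<in>idx M. x m * cnj (atom M (\<tau> k) m)) / of_nat N" for k
  have N: "of_nat N \<noteq> (0 :: complex)"
    unfolding of_nat_eq_0_iff N_def by simp
  have "\<forall>k<N. \<tau> k \<in> {0..<1}" unfolding \<tau>_def N_def by auto
  moreover have "x n = (\<Sum>k<N. a k * atom M (\<tau> k) n)" if n: "n \<in> idx M" for n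
  proof -
    have orth: "(\<Sum>k<N. cnj (atom M (\<tau> k) m) * atom M (\<tau> k) n) = (if m = n then of_nat N else 0)"
      if m: "m \<in> idx M" for m
    proof -
      have "\<bar>n - m\<bar> < int N" using n m unfolding idx_def N_def by auto
      from sum_exp_roots_of_unity[OF this] show ?thesis
        using n m by (simp add: cnj_atom_mult_atom \<tau>_def)
    qed
    have "(\<Sum>k<N. a k * atom M (\<tau> k) n)
        = (\<Sum>m\<in>idx M. x m * (\<Sum>k<N. cnj (atom M (\<tau> k) m) * atom M (\<tau> k) n)) / of_nat N"
      unfolding a_def by (simp add: sum_divide_distrib sum_distrib_left sum_distrib_right
          sum.swap[of _ "{..<N}"] mult.assoc)
    also have "\<dots> = (\<Sum>m\<in>idx M. x m * (if m = n then of_nat N else 0)) / of_nat N"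
      by (simp add: orth cong: sum.cong)
    also have "\<dots> = x n"
      using n N by (simp add: if_distrib[of "times _"] cong: if_cong)
    finally show ?thesis by simp
  qed
  ultimately show ?thesis by blast
qed

definition atomic_costs :: "nat \<Rightarrow> (int \<Rightarrow> complex) \<Rightarrow> real set" where
  "atomic_costs M x = {(\<Sum>k<K. norm (a k)) | (K::nat) a \<tau>.
      (\<forall>k<K. \<tau> k \<in> {0..<1}) \<and> (\<forall>n\<in>idx M. x n = (\<Sum>k<K. a k * atom M (\<tau> k) n))}"

lemma atomic_norm_eq_Inf_costs: "atomic_norm M x = Inf (atomic_costs M x)"
  by (simp add: atomic_norm_def atomic_costs_def)

lemma atomic_costs_nonempty: "atomic_costs M x \<noteq> {}"
  using atomic_decomposition_exists[of M x] unfolding atomic_costs_def by blast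

lemma atomic_costs_nonneg: "s \<in> atomic_costs M x \<Longrightarrow> 0 \<le> s"
  unfolding atomic_costs_def by (auto intro: sum_nonneg)

lemma atomic_norm_le_cost: "s \<in> atomic_costs M x \<Longrightarrow> atomic_norm M x \<le> s"
  unfolding atomic_norm_eq_Inf_costs
  by (rule cInf_lower) (auto simp: bdd_below_def dest: atomic_costs_nonneg)

lemma atomic_norm_greatest: "(\<And>s. s \<in> atomic_costs M x \<Longrightarrow> c \<le> s) \<Longrightarrow> c \<le> atomic_norm M x"
  unfolding atomic_norm_eq_Inf_costs using atomic_costs_nonempty by (rule cInf_greatest)

lemma atomic_norm_nonneg: "0 \<le> atomic_norm M x"
  by (rule atomic_norm_greatest) (rule atomic_costs_nonneg)

lemma atomic_norm_zero [simp]: "atomic_norm M (\<lambda>n. 0) = 0"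
proof -
  have "0 \<in> atomic_costs M (\<lambda>n. 0)"
    unfolding atomic_costs_def by (rule CollectI, rule exI[of _ "0::nat"]) simp
  then show ?thesis using atomic_norm_le_cost atomic_norm_nonneg by (metis order_antisym)
qed

lemma norm_le_atomic_cost:
  assumes "s \<in> atomic_costs M x" "n \<in> idx M"
  shows "norm (x n) \<le> s"
proof -
  obtain K :: nat and a \<tau> where s: "s = (\<Sum>k<K. norm (a k))"
    and x: "\<forall>n\<in>idx M. x n = (\<Sum>k<K. a k * atom M (\<tau> k) n)"
    using assms(1) unfolding atomic_costs_def by blast
  have "norm (x n) \<le> (\<Sum>k<K. norm (a k * atom M (\<tau> k) n))"
    using x assms(2) by (simp add: norm_sum)
  also have "\<dots> \<le> s"
    unfolding s by (intro sum_mono) (simp add: norm_mult atom_def mult_left_le)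
  finally show ?thesis .
qed

lemma norm_le_atomic_norm: "n \<in> idx M \<Longrightarrow> norm (x n) \<le> atomic_norm M x"
  by (rule atomic_norm_greatest) (rule norm_le_atomic_cost)

lemma sum_lessThan_add_nat:
  "(\<Sum>k<K + L. f k) = (\<Sum>k<K. f k) + (\<Sum>k<L. f (K + k))"
  for f :: "nat \<Rightarrow> 'a::comm_monoid_add"
  by (induction L) (simp_all add: add.assoc)

lemma atomic_costs_add:
  assumes "s \<in> atomic_costs M x" "t \<in> atomic_costs M z"
  shows "s + t \<in> atomic_costs M (\<lambda>n. x n + z n)"
proof -
  obtain K :: nat and a \<tau> where x: "s = (\<Sum>k<K. norm (a k))" "\<forall>k<K. \<tau> k \<in> {0..<1}"
    "\<forall>n\<in>idx M. x n = (\<Sum>k<K. a k * atom M (\<tau> k) n)"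
    using assms(1) unfolding atomic_costs_def by blast
  obtain L :: nat and b \<sigma> where z: "t = (\<Sum>k<L. norm (b k))" "\<forall>k<L. \<sigma> k \<in> {0..<1}"
    "\<forall>n\<in>idx M. z n = (\<Sum>k<L. b k * atom M (\<sigma> k) n)"
    using assms(2) unfolding atomic_costs_def by blast
  define c where "c k = (if k < K then a k else b (k - K))" for k
  define \<rho> where "\<rho> k = (if k < K then \<tau> k else \<sigma> (k - K))" for k
  have concat: "(\<Sum>k<K + L. f (c k) (\<rho> k)) = (\<Sum>k<K. f (a k) (\<tau> k)) + (\<Sum>k<L. f (b k) (\<sigma> k))"
    for f :: "complex \<Rightarrow> real \<Rightarrow> 'b::comm_monoid_add"
    unfolding sum_lessThan_add_nat by (simp add: c_def \<rho>_def)
  have "\<forall>k<K + L. \<rho> k \<in> {0..<1}" using x z unfolding \<rho>_def by auto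
  moreover have "s + t = (\<Sum>k<K + L. norm (c k))"
    using concat[of "\<lambda>u v. norm u"] x z by simp
  moreover have "\<forall>n\<in>idx M. x n + z n = (\<Sum>k<K + L. c k * atom M (\<rho> k) n)"
    using concat[of "\<lambda>u v. u * atom M v _"] x z by simp
  ultimately show ?thesis unfolding atomic_costs_def by blast
qed

lemma atomic_costs_scale:
  assumes "s \<in> atomic_costs M x"
  shows "norm c * s \<in> atomic_costs M (\<lambda>n. c * x n)"
proof -
  obtain K :: nat and a \<tau> where x: "s = (\<Sum>k<K. norm (a k))" "\<forall>k<K. \<tau> k \<in> {0..<1}"
    "\<forall>n\<in>idx M. x n = (\<Sum>k<K. a k * atom M (\<tau> k) n)"
    using assms unfolding atomic_costs_def by blast
  have "norm c * s = (\<Sum>k<K. norm (c * a k))"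
    using x by (simp add: sum_distrib_left norm_mult)
  moreover have "\<forall>n\<in>idx M. c * x n = (\<Sum>k<K. (c * a k) * atom M (\<tau> k) n)"
    using x by (simp add: sum_distrib_left mult.assoc)
  ultimately show ?thesis
    using x(2) unfolding atomic_costs_def by (auto intro!: exI[of _ K] exI[of _ \<tau>])
qed

lemma atomic_norm_triangle:
  "atomic_norm M (\<lambda>n. x n + z n) \<le> atomic_norm M x + atomic_norm M z"
proof -
  have "atomic_norm M (\<lambda>n. x n + z n) - t \<le> atomic_norm M x" if "t \<in> atomic_costs M z" for t
    by (rule atomic_norm_greatest)
      (use atomic_norm_le_cost[OF atomic_costs_add[OF _ that]] in force)
  then have "atomic_norm M (\<lambda>n. x n + z n) - atomic_norm M x \<le> atomic_norm M z"
    by (intro atomic_norm_greatest) force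
  then show ?thesis by simp
qed

lemma atomic_norm_scale_le: "atomic_norm M (\<lambda>n. c * x n) \<le> norm c * atomic_norm M x"
proof (cases "c = 0")
  case False
  have "atomic_norm M (\<lambda>n. c * x n) / norm c \<le> atomic_norm M x"
    by (rule atomic_norm_greatest)
      (use atomic_norm_le_cost[OF atomic_costs_scale] False in \<open>simp add: field_simps\<close>)
  then show ?thesis using False by (simp add: field_simps)
qed simp

lemma atomic_norm_scaleR:
  assumes "0 \<le> t"
  shows "atomic_norm M (\<lambda>n. complex_of_real t * x n) = t * atomic_norm M x"
proof (cases "t = 0")
  case False
  then have "atomic_norm M x = atomic_norm M (\<lambda>n. complex_of_real (1 / t) * (complex_of_real t * x n))"
    by simp
  also have "\<dots> \<le> norm (complex_of_real (1 / t)) * atomic_norm M (\<lambda>n. complex_of_real t * x n)"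
    by (rule atomic_norm_scale_le)
  also have "\<dots> = atomic_norm M (\<lambda>n. complex_of_real t * x n) / t"
    using assms by (simp add: norm_divide)
  finally have "t * atomic_norm M x \<le> atomic_norm M (\<lambda>n. complex_of_real t * x n)"
    using assms False by (simp add: field_simps)
  with atomic_norm_scale_le[of M "complex_of_real t" x] assms show ?thesis by simp
qed simp

lemma rinner_add: "rinner M p (\<lambda>n. x n + z n) = rinner M p x + rinner M p z"
  by (simp add: rinner_def sum.distrib algebra_simps)

lemma rinner_diff: "rinner M p (\<lambda>n. x n - z n) = rinner M p x - rinner M p z"
  by (simp add: rinner_def sum_subtractf algebra_simps)

lemma rinner_scaleR: "rinner M p (\<lambda>n. complex_of_real t * x n) = t * rinner M p x"
  by (simp add: rinner_def sum_distrib_left mult.assoc flip: Re_complex_of_real)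
    (simp add: rinner_def sum_distrib_left mult.assoc)

lemma rinner_mult_right: "rinner M p (\<lambda>n. g n * z n) = rinner M (\<lambda>n. cnj (g n) * p n) z"
  by (simp add: rinner_def algebra_simps)

lemma rinner_zero [simp]: "rinner M p (\<lambda>n. 0) = 0"
  by (simp add: rinner_def)

lemma rinner_le_atomic_norm:
  "rinner M p x \<le> (\<Sum>n\<in>idx M. norm (p n)) * atomic_norm M x"
proof -
  have "rinner M p x \<le> (\<Sum>n\<in>idx M. norm (cnj (x n) * p n))"
    unfolding rinner_def using complex_Re_le_cmod norm_sum order_trans by blast
  also have "\<dots> \<le> (\<Sum>n\<in>idx M. norm (p n) * atomic_norm M x)"
    by (intro sum_mono) (metis norm_mult complex_mod_cnj mult.commute mult_left_mono
        norm_ge_zero norm_le_atomic_norm)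
  finally show ?thesis by (simp add: sum_distrib_right)
qed

lemma dual_atomic_norm_le_iff:
  assumes "0 \<le> lam"
  shows "dual_atomic_norm M p \<le> lam \<longleftrightarrow> (\<forall>x\<in>cvec M. rinner M p x \<le> lam * atomic_norm M x)"
proof -
  define S where "S = {rinner M p x | x. x \<in> cvec M \<and> atomic_norm M x \<le> 1}"
  have "(\<lambda>n. 0) \<in> cvec M" by (simp add: cvec_def)
  then have "S \<noteq> {}" unfolding S_def by fastforce
  have "bdd_above S"
  proof (rule bdd_aboveI)
    fix s assume "s \<in> S"
    then obtain x where "s = rinner M p x" "atomic_norm M x \<le> 1" unfolding S_def by blast
    with rinner_le_atomic_norm[of M p x] show "s \<le> (\<Sum>n\<in>idx M. norm (p n))"
      by (smt (verit) mult_left_le norm_ge_zero sum_nonneg)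
  qed
  have "Sup S \<le> lam \<longleftrightarrow> (\<forall>x\<in>cvec M. rinner M p x \<le> lam * atomic_norm M x)"
  proof
    assume Sup: "Sup S \<le> lam"
    show "\<forall>x\<in>cvec M. rinner M p x \<le> lam * atomic_norm M x"
    proof
      fix x assume x: "x \<in> cvec M"
      show "rinner M p x \<le> lam * atomic_norm M x"
      proof (cases "atomic_norm M x = 0")
        case True
        then show ?thesis using rinner_le_atomic_norm[of M p x] by simp
      next
        case False
        define t where "t = 1 / atomic_norm M x"
        have t: "0 < t" using False atomic_norm_nonneg[of M x] by (simp add: t_def)
        have "atomic_norm M (\<lambda>n. complex_of_real t * x n) = 1"
          using False t by (simp only: atomic_norm_scaleR less_imp_le) (simp add: t_def)
        moreover have "(\<lambda>n. complex_of_real t * x n) \<in> cvec M"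
          using x by (simp add: cvec_def)
        ultimately have "t * rinner M p x \<in> S"
          unfolding S_def by (force simp flip: rinner_scaleR)
        then have "t * rinner M p x \<le> lam"
          using cSup_upper[OF _ \<open>bdd_above S\<close>] Sup by fastforce
        then show ?thesis using t by (simp add: t_def field_simps)
      qed
    qed
  next
    assume bound: "\<forall>x\<in>cvec M. rinner M p x \<le> lam * atomic_norm M x"
    show "Sup S \<le> lam"
    proof (rule cSup_least[OF \<open>S \<noteq> {}\<close>])
      fix s assume "s \<in> S"
      then obtain x where "s = rinner M p x" "x \<in> cvec M" "atomic_norm M x \<le> 1"
        unfolding S_def by blast
      with bound assms show "s \<le> lam"
        by (smt (verit) mult_left_le)
    qed
  qed
  then show ?thesis by (simp add: dual_atomic_norm_def S_def)
qed

lemma le_if_le_add_small_multiples: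
  fixes a b c :: real
  assumes "\<And>s. 0 < s \<Longrightarrow> s \<le> 1 \<Longrightarrow> a \<le> b + s * c"
  shows "a \<le> b"
proof (rule field_le_epsilon)
  fix e :: real assume "0 < e"
  define s where "s = min 1 (e / (\<bar>c\<bar> + 1))"
  have s: "0 < s" "s \<le> 1" using \<open>0 < e\<close> by (auto simp: s_def)
  have "s * c \<le> s * (\<bar>c\<bar> + 1)"
    using s by (intro mult_left_mono) auto
  also have "\<dots> \<le> e / (\<bar>c\<bar> + 1) * (\<bar>c\<bar> + 1)"
    using \<open>0 < e\<close> by (intro mult_right_mono) (auto simp: s_def)
  finally have "s * c \<le> e" by simp
  then show "a \<le> b + e" using assms[OF s] by simp
qed

definition model :: "(int \<Rightarrow> complex) \<Rightarrow> (int \<Rightarrow> complex) \<Rightarrow> (int \<Rightarrow> complex) \<Rightarrow> int \<Rightarrow> complex" where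
  "model g x1 x2 = (\<lambda>n. x1 n + g n * x2 n)"

definition sqnorm :: "nat \<Rightarrow> (int \<Rightarrow> complex) \<Rightarrow> real" where
  "sqnorm M z = (\<Sum>n\<in>idx M. (norm (z n))\<^sup>2)"

lemma sqnorm_nonneg: "0 \<le> sqnorm M z"
  by (simp add: sqnorm_def sum_nonneg)

lemma sqnorm_scaleR: "sqnorm M (\<lambda>n. complex_of_real t * z n) = t\<^sup>2 * sqnorm M z"
  by (simp add: sqnorm_def norm_mult power_mult_distrib sum_distrib_left)

lemma model_perturb:
  "(\<lambda>n. model g (\<lambda>n. x1 n + c * z1 n) (\<lambda>n. x2 n + c * z2 n) n - model g x1 x2 n)
     = (\<lambda>n. c * model g z1 z2 n)"
  by (simp add: model_def algebra_simps)

lemma objective_expand: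
  fixes y g x1 x2 xh1 xh2 :: "int \<Rightarrow> complex"
  defines "r \<equiv> \<lambda>n. y n - model g xh1 xh2 n"
    and "d \<equiv> \<lambda>n. model g x1 x2 n - model g xh1 xh2 n"
  shows "objective M lam y g x1 x2 = objective M lam y g xh1 xh2 - rinner M r d + sqnorm M d / 2
     + lam * (atomic_norm M x1 + atomic_norm M x2 - atomic_norm M xh1 - atomic_norm M xh2)"
proof -
  have square_diff: "(norm (a - b))\<^sup>2 = (norm a)\<^sup>2 - 2 * Re (cnj b * a) + (norm b)\<^sup>2"
    for a b :: complex
    unfolding cmod_power2 by (simp add: power2_diff algebra_simps)
  have "y n - x1 n - g n * x2 n = r n - d n" for n
    by (simp add: r_def d_def model_def)
  then have "(norm (y n - x1 n - g n * x2 n))\<^sup>2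
      = (norm (r n))\<^sup>2 - 2 * Re (cnj (d n) * r n) + (norm (d n))\<^sup>2" for n
    by (simp only: square_diff)
  then have "(\<Sum>n\<in>idx M. (norm (y n - x1 n - g n * x2 n))\<^sup>2)
      = sqnorm M r - 2 * rinner M r d + sqnorm M d"
    by (simp add: sqnorm_def rinner_def sum.distrib sum_subtractf sum_distrib_left Re_sum)
  moreover have "(\<Sum>n\<in>idx M. (norm (y n - xh1 n - g n * xh2 n))\<^sup>2) = sqnorm M r"
    by (simp add: sqnorm_def r_def model_def algebra_simps)
  ultimately show ?thesis
    by (simp add: objective_def algebra_simps)
qed

lemma minimizer_imp_rinner_model_le:
  fixes y g xh1 xh2 z1 z2 :: "int \<Rightarrow> complex"
  assumes min: "\<forall>x1\<in>cvec M. \<forall>x2\<in>cvec M. objective M lam y g xh1 xh2 \<le> objective M lam y g x1 x2"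
    and "xh1 \<in> cvec M" "xh2 \<in> cvec M" "z1 \<in> cvec M" "z2 \<in> cvec M" "0 \<le> lam"
  shows "rinner M (\<lambda>n. y n - model g xh1 xh2 n) (model g z1 z2)
    \<le> lam * (atomic_norm M z1 + atomic_norm M z2)"
proof (rule le_if_le_add_small_multiples)
  fix s :: real assume s: "0 < s" "s \<le> 1"
  let ?r = "\<lambda>n. y n - model g xh1 xh2 n" and ?w = "model g z1 z2"
  define x1 where "x1 = (\<lambda>n. xh1 n + complex_of_real s * z1 n)"
  define x2 where "x2 = (\<lambda>n. xh2 n + complex_of_real s * z2 n)"
  have "x1 \<in> cvec M" "x2 \<in> cvec M" using assms by (simp_all add: x1_def x2_def cvec_def)
  then have "0 \<le> objective M lam y g x1 x2 - objective M lam y g xh1 xh2"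
    using min by fastforce
  also have "\<dots> = - s * rinner M ?r ?w + s\<^sup>2 * sqnorm M ?w / 2
      + lam * (atomic_norm M x1 + atomic_norm M x2 - atomic_norm M xh1 - atomic_norm M xh2)"
    unfolding objective_expand[of M lam y g x1 x2 xh1 xh2] unfolding x1_def x2_def model_perturb
    by (simp add: rinner_scaleR sqnorm_scaleR)
  also have "\<dots> \<le> - s * rinner M ?r ?w + s\<^sup>2 * sqnorm M ?w / 2
      + lam * (s * (atomic_norm M z1 + atomic_norm M z2))"
  proof -
    have "atomic_norm M x1 \<le> atomic_norm M xh1 + s * atomic_norm M z1"
      using atomic_norm_triangle[of M xh1 "\<lambda>n. complex_of_real s * z1 n"]
        atomic_norm_scaleR[of s M z1] s
      unfolding x1_def by simp
    moreover have "atomic_norm M x2 \<le> atomic_norm M xh2 + s * atomic_norm M z2"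
      using atomic_norm_triangle[of M xh2 "\<lambda>n. complex_of_real s * z2 n"]
        atomic_norm_scaleR[of s M z2] s
      unfolding x2_def by simp
    ultimately have "atomic_norm M x1 + atomic_norm M x2 - atomic_norm M xh1 - atomic_norm M xh2
        \<le> s * (atomic_norm M z1 + atomic_norm M z2)"
      by (simp add: algebra_simps)
    then show ?thesis
      using mult_left_mono[OF _ \<open>0 \<le> lam\<close>] by simp
  qed
  finally have "s * rinner M ?r ?w \<le> s * (lam * (atomic_norm M z1 + atomic_norm M z2)
      + s * (sqnorm M ?w / 2))"
    by (simp add: algebra_simps power2_eq_square)
  then show "rinner M ?r ?w \<le> lam * (atomic_norm M z1 + atomic_norm M z2) + s * (sqnorm M ?w / 2)"
    using s by simp
qed

text \<open>The penalty changes by exactly \<open>-s\<close> times its value along \<open>(1 - s) (x\<^sub>1, x\<^sub>2)\<close>;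
  the triangle inequality would only bound it in the useless direction.\<close>

lemma minimizer_imp_atomic_norms_le_rinner:
  fixes y g xh1 xh2 :: "int \<Rightarrow> complex"
  assumes min: "\<forall>x1\<in>cvec M. \<forall>x2\<in>cvec M. objective M lam y g xh1 xh2 \<le> objective M lam y g x1 x2"
    and "xh1 \<in> cvec M" "xh2 \<in> cvec M"
  shows "lam * (atomic_norm M xh1 + atomic_norm M xh2)
    \<le> rinner M (\<lambda>n. y n - model g xh1 xh2 n) (model g xh1 xh2)"
proof (rule le_if_le_add_small_multiples)
  fix s :: real assume s: "0 < s" "s \<le> 1"
  let ?r = "\<lambda>n. y n - model g xh1 xh2 n" and ?u = "model g xh1 xh2"
  define x1 where "x1 = (\<lambda>n. complex_of_real (1 - s) * xh1 n)"
  define x2 where "x2 = (\<lambda>n. complex_of_real (1 - s) * xh2 n)"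
  have "x1 \<in> cvec M" "x2 \<in> cvec M" using assms by (simp_all add: x1_def x2_def cvec_def)
  then have "0 \<le> objective M lam y g x1 x2 - objective M lam y g xh1 xh2"
    using min by fastforce
  also have "\<dots> = s * rinner M ?r ?u + s\<^sup>2 * sqnorm M ?u / 2
      - s * lam * (atomic_norm M xh1 + atomic_norm M xh2)"
  proof -
    have "(\<lambda>n. model g x1 x2 n - ?u n) = (\<lambda>n. complex_of_real (- s) * ?u n)"
      by (simp add: x1_def x2_def model_def algebra_simps)
    moreover have "atomic_norm M x1 = (1 - s) * atomic_norm M xh1"
      unfolding x1_def using s by (intro atomic_norm_scaleR) simp
    moreover have "atomic_norm M x2 = (1 - s) * atomic_norm M xh2"
      unfolding x2_def using s by (intro atomic_norm_scaleR) simp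
    ultimately show ?thesis
      unfolding objective_expand[of M lam y g x1 x2 xh1 xh2]
      by (simp only: rinner_scaleR sqnorm_scaleR) (simp add: algebra_simps)
  qed
  finally have "s * (lam * (atomic_norm M xh1 + atomic_norm M xh2))
      \<le> s * (rinner M ?r ?u + s * (sqnorm M ?u / 2))"
    by (simp add: algebra_simps power2_eq_square)
  then show "lam * (atomic_norm M xh1 + atomic_norm M xh2) \<le> rinner M ?r ?u + s * (sqnorm M ?u / 2)"
    using s by simp
qed

lemma rinner_conditions_imp_minimizer:
  fixes y g xh1 xh2 :: "int \<Rightarrow> complex"
  assumes bound: "\<forall>z1\<in>cvec M. \<forall>z2\<in>cvec M. rinner M (\<lambda>n. y n - model g xh1 xh2 n) (model g z1 z2)
      \<le> lam * (atomic_norm M z1 + atomic_norm M z2)"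
    and eq: "rinner M (\<lambda>n. y n - model g xh1 xh2 n) (model g xh1 xh2)
      = lam * (atomic_norm M xh1 + atomic_norm M xh2)"
    and "x1 \<in> cvec M" "x2 \<in> cvec M"
  shows "objective M lam y g xh1 xh2 \<le> objective M lam y g x1 x2"
proof -
  let ?r = "\<lambda>n. y n - model g xh1 xh2 n"
  have "rinner M ?r (\<lambda>n. model g x1 x2 n - model g xh1 xh2 n)
      \<le> lam * (atomic_norm M x1 + atomic_norm M x2 - atomic_norm M xh1 - atomic_norm M xh2)"
    using bound assms(3,4) eq by (simp add: rinner_diff algebra_simps)
  then show ?thesis
    unfolding objective_expand[of M lam y g x1 x2 xh1 xh2]
    using sqnorm_nonneg[of M "\<lambda>n. model g x1 x2 n - model g xh1 xh2 n"] by linarith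
qed

lemma minimizer_iff_rinner_conditions:
  fixes y g xh1 xh2 :: "int \<Rightarrow> complex"
  assumes "xh1 \<in> cvec M" "xh2 \<in> cvec M" "0 \<le> lam"
  shows "(\<forall>x1\<in>cvec M. \<forall>x2\<in>cvec M. objective M lam y g xh1 xh2 \<le> objective M lam y g x1 x2)
    \<longleftrightarrow> (\<forall>z1\<in>cvec M. \<forall>z2\<in>cvec M. rinner M (\<lambda>n. y n - model g xh1 xh2 n) (model g z1 z2)
            \<le> lam * (atomic_norm M z1 + atomic_norm M z2))
      \<and> rinner M (\<lambda>n. y n - model g xh1 xh2 n) (model g xh1 xh2)
          = lam * (atomic_norm M xh1 + atomic_norm M xh2)"
  using minimizer_imp_rinner_model_le[OF _ assms(1,2) _ _ assms(3)]
    minimizer_imp_atomic_norms_le_rinner[OF _ assms(1,2)]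
    rinner_conditions_imp_minimizer assms(1,2)
  by (meson order_antisym)

lemma rinner_model_le_iff:
  "(\<forall>z1\<in>cvec M. \<forall>z2\<in>cvec M. rinner M p (model g z1 z2) \<le> lam * (atomic_norm M z1 + atomic_norm M z2))
   \<longleftrightarrow> (\<forall>z\<in>cvec M. rinner M p z \<le> lam * atomic_norm M z)
     \<and> (\<forall>z\<in>cvec M. rinner M (\<lambda>n. cnj (g n) * p n) z \<le> lam * atomic_norm M z)"
proof -
  have "(\<lambda>n. 0) \<in> cvec M" by (simp add: cvec_def)
  then show ?thesis
    unfolding model_def rinner_add rinner_mult_right
    by (fastforce simp: distrib_left intro: add_mono)
qed

theorem proposition7:
  fixes M :: nat and lam :: real and y g xh1 xh2 :: "int \<Rightarrow> complex"
  assumes "M \<ge> 1" and "lam > 0"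
    and "y \<in> cvec M" and "g \<in> cvec M"
    and "xh1 \<in> cvec M" and "xh2 \<in> cvec M"
  shows "(\<forall>x1\<in>cvec M. \<forall>x2\<in>cvec M.
            objective M lam y g xh1 xh2 \<le> objective M lam y g x1 x2)
     \<longleftrightarrow>
     (let r = (\<lambda>n. y n - (xh1 n + hadamard g xh2 n)) in
        dual_atomic_norm M r \<le> lam
      \<and> dual_atomic_norm M (hadamard (\<lambda>n. cnj (g n)) r) \<le> lam
      \<and> rinner M r (\<lambda>n. xh1 n + hadamard g xh2 n)
          = lam * atomic_norm M xh1 + lam * atomic_norm M xh2)"
proof -
  have lam: "0 \<le> lam" using assms(2) by simp
  have "xh1 n + hadamard g xh2 n = model g xh1 xh2 n" for n
    by (simp add: hadamard_def model_def)
  then show ?thesis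
    unfolding Let_def minimizer_iff_rinner_conditions[OF assms(5,6) lam] rinner_model_le_iff
      dual_atomic_norm_le_iff[OF lam] hadamard_def[of "\<lambda>n. cnj (g n)"]
    by (simp add: distrib_left)
qed

end
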